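(* Let $G$ be a simple graph with $n$ vertices and $m$ edges, where $n$ is odd and $m \ge n-1 \ge 3$. Then $$\mathrm{HE}(G) \le \begin{cases} \dfrac{2m}{n-1} + \dfrac{\sqrt{2mn(n^2-3n+1)(n^2-n-2m)}}{n(n-1)}, & \text{if } m \le \dfrac{n^2(n-3)^2}{2(n^2-4n+11)},\\[2ex] \dfrac{1}{n}\sqrt{2m(2n-1)(n^2-2m)}, & \text{otherwise.}\end{cases}$$
   Context: All graphs are finite, simple and undirected. For a graph $G$ on $n$ vertices with adjacency matrix $A$, let $\lambda_1 \ge \lambda_2 \ge \cdots \ge \lambda_n$ be the eigenvalues of $A$ and $r := \lfloor n/2 \rfloor$. The Hückel energy of $G$ is $\mathrm{HE}(G) = 2\sum_{i=1}^{r}\lambda_i$ if $n=2r$, and $\mathrm{HE}(G) = 2\sum_{i=1}^{r}\lambda_i + \lambda_{r+1}$ if $n=2r+1$. *)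

theory Defs
  imports Complex_Main "Jordan_Normal_Form.Char_Poly"
begin

text \<open>A simple graph on the vertex set {0..<n} is given by an edge relation E
  that is symmetric and irreflexive (only its restriction to {0..<n} matters).\<close>

definition simple_graph :: "nat \<Rightarrow> (nat \<Rightarrow> nat \<Rightarrow> bool) \<Rightarrow> bool" where
  "simple_graph n E \<longleftrightarrow> (\<forall>i<n. \<forall>j<n. E i j \<longrightarrow> E j i) \<and> (\<forall>i<n. \<not> E i i)"

definition num_edges :: "nat \<Rightarrow> (nat \<Rightarrow> nat \<Rightarrow> bool) \<Rightarrow> nat" where
  "num_edges n E = card {{i, j} | i j. i < n \<and> j < n \<and> E i j}"

definition adj_mat :: "nat \<Rightarrow> (nat \<Rightarrow> nat \<Rightarrow> bool) \<Rightarrow> real mat" where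
  "adj_mat n E = mat n n (\<lambda>(i, j). if E i j then 1 else 0)"

text \<open>The eigenvalues of a square matrix counted with multiplicity, in non-increasing
  order: the unique non-increasing list whose linear factors multiply to the
  characteristic polynomial (it exists for real symmetric matrices).\<close>

definition eigenvalues_desc :: "real mat \<Rightarrow> real list" where
  "eigenvalues_desc A = (THE ls. length ls = dim_row A \<and> sorted_wrt (\<ge>) ls \<and>
       char_poly A = prod_list (map (\<lambda>l. [:- l, 1:]) ls))"

text \<open>Hueckel energy; eigenvalue lambda_i is (eigenvalues_desc A) ! (i - 1).\<close>

definition huckel_energy :: "nat \<Rightarrow> (nat \<Rightarrow> nat \<Rightarrow> bool) \<Rightarrow> real" where
  "huckel_energy n E =
     (let ls = eigenvalues_desc (adj_mat n E); r = n div 2 in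
      if even n then 2 * (\<Sum>i<r. ls ! i) else 2 * (\<Sum>i<r. ls ! i) + ls ! r)"

end

theory Submission
  imports Defs "Jordan_Normal_Form.Schur_Decomposition" "HOL-Analysis.Analysis"
begin

text \<open>Let \<open>\<lambda>\<^sub>0 \<ge> \<dots> \<ge> \<lambda>\<^sub>n\<^sub>-\<^sub>1\<close> be the adjacency eigenvalues, \<open>n = 2r + 1\<close>. They sum to
  \<open>tr A = 0\<close>, their squares sum to \<open>tr A\<^sup>2 = 2m\<close>, and \<open>\<lambda>\<^sub>0 \<ge> 2m/n\<close> (Rayleigh quotient of
  the all-ones vector). Because the eigenvalues sum to zero, the Hueckel energy equals
  \<open>\<lambda>\<^sub>0 + \<Sum>\<^sub>i\<^sub>\<ge>\<^sub>1 w\<^sub>i \<lambda>\<^sub>i\<close> with weights \<open>w = (1,\<dots>,1,0,-1,\<dots>,-1)\<close>. Cauchy-Schwarz applied to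
  the centred vectors \<open>(w\<^sub>i)\<close> and \<open>(\<lambda>\<^sub>i)\<close>, \<open>i \<ge> 1\<close>, bounds this by
  \<open>\<alpha>\<lambda>\<^sub>0 + sqrt (K (2m - \<alpha>\<lambda>\<^sub>0\<^sup>2))\<close> with \<open>\<alpha> = n/(n-1)\<close> and \<open>K = (n\<^sup>2-3n+1)/(n-1)\<close>, a function
  of \<open>\<lambda>\<^sub>0\<close> that decreases from \<open>2m/n\<close> on; its value at \<open>2m/n\<close> is the first bound. The first
  bound never exceeds the second, so the latter holds as well.\<close>

section \<open>Eigenvalues of real symmetric matrices\<close>

lemma real_symmetric_eigenvalue_real:
  fixes A :: "real mat" and a :: complex
  assumes A: "A \<in> carrier_mat n n"
    and sym: "\<And>i j. i < n \<Longrightarrow> j < n \<Longrightarrow> A $$ (i,j) = A $$ (j,i)"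
    and ev: "eigenvalue (map_mat complex_of_real A) a"
  shows "Im a = 0"
proof -
  define A' where "A' = map_mat complex_of_real A"
  have A': "A' \<in> carrier_mat n n" unfolding A'_def using A by simp
  obtain v where v: "v \<in> carrier_vec n" "v \<noteq> 0\<^sub>v n" "A' *\<^sub>v v = a \<cdot>\<^sub>v v"
    using ev A' unfolding A'_def[symmetric] eigenvalue_def eigenvector_def by auto
  have row: "(\<Sum>j<n. complex_of_real (A $$ (i,j)) * v $ j) = a * v $ i" if i: "i < n" for i
  proof -
    have "(A' *\<^sub>v v) $ i = (\<Sum>j<n. complex_of_real (A $$ (i,j)) * v $ j)"
      using A A' v(1) i unfolding A'_def by (simp add: scalar_prod_def lessThan_atLeast0)
    with v(3) v(1) i show ?thesis by simp
  qed
  define X where "X = (\<Sum>i<n. \<Sum>j<n. cnj (v $ i) * complex_of_real (A $$ (i,j)) * v $ j)"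
  define S where "S = (\<Sum>i<n. (cmod (v $ i))\<^sup>2)"
  \<comment> \<open>the Hermitian form \<open>v\<^sup>* A v\<close> equals \<open>a |v|\<^sup>2\<close> and, by symmetry of \<open>A\<close>, its own conjugate\<close>
  have "X = (\<Sum>i<n. cnj (v $ i) * (\<Sum>j<n. complex_of_real (A $$ (i,j)) * v $ j))"
    unfolding X_def by (simp add: sum_distrib_left mult.assoc)
  also have "\<dots> = a * (\<Sum>i<n. cnj (v $ i) * v $ i)"
    using row by (simp add: sum_distrib_left algebra_simps)
  also have "(\<Sum>i<n. cnj (v $ i) * v $ i) = complex_of_real S"
  proof -
    have "cnj z * z = complex_of_real ((cmod z)\<^sup>2)" for z
      by (subst complex_norm_square) (simp add: mult.commute)
    then show ?thesis unfolding S_def of_real_sum by simp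
  qed
  finally have XS: "X = a * complex_of_real S" .
  have "cnj X = (\<Sum>i<n. \<Sum>j<n. v $ i * complex_of_real (A $$ (i,j)) * cnj (v $ j))"
    unfolding X_def by (simp add: cnj_sum)
  also have "\<dots> = (\<Sum>j<n. \<Sum>i<n. v $ i * complex_of_real (A $$ (i,j)) * cnj (v $ j))"
    by (rule sum.swap)
  also have "\<dots> = X" unfolding X_def
    by (intro sum.cong refl) (simp add: sym mult.commute mult.left_commute)
  finally have "Im (cnj X) = Im X" by simp
  then have "Im X = 0" by simp
  obtain i where i: "i < n" "v $ i \<noteq> 0"
    using v(1,2) by (metis carrier_vecD eq_vecI index_zero_vec(1,2))
  have "S > 0" unfolding S_def using i by (intro sum_pos2[of _ i]) auto
  with \<open>Im X = 0\<close> XS show ?thesis by simp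
qed

lemma char_poly_real_symmetric_splits:
  fixes A :: "real mat"
  assumes A: "A \<in> carrier_mat n n"
    and sym: "\<And>i j. i < n \<Longrightarrow> j < n \<Longrightarrow> A $$ (i,j) = A $$ (j,i)"
  shows "\<exists>ls. length ls = n \<and> char_poly A = (\<Prod>l\<leftarrow>ls. [:-l, 1:])"
proof -
  interpret c: map_poly_inj_comm_ring_hom "of_real :: real \<Rightarrow> complex" ..
  define A' where "A' = map_mat complex_of_real A"
  have A': "A' \<in> carrier_mat n n" unfolding A'_def using A by simp
  obtain as where cp: "char_poly A' = (\<Prod>a\<leftarrow>as. [:- a, 1:])" and len: "length as = n"
    using char_poly_factorized[OF A'] by blast
  have real: "Im a = 0" if "a \<in> set as" for a
  proof (rule real_symmetric_eigenvalue_real[OF A sym])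
    have "poly (char_poly A') a = 0" unfolding cp using that by (rule linear_poly_root)
    then show "eigenvalue (map_mat complex_of_real A) a"
      using eigenvalue_root_char_poly[OF A'] unfolding A'_def by simp
  qed
  define ls where "ls = map Re as"
  have "map (\<lambda>a. [:- a, 1:]) as = map (\<lambda>l. map_poly of_real [:-l, 1:]) ls"
    unfolding ls_def using real by (auto simp: complex_eq_iff)
  then have "char_poly A' = map_poly of_real (\<Prod>l\<leftarrow>ls. [:-l, 1:])"
    unfolding cp by (simp add: c.hom_prod_list o_def)
  moreover have "char_poly A' = map_poly of_real (char_poly A)"
    unfolding A'_def using of_real_hom.char_poly_hom[OF A] by simp
  ultimately have "char_poly A = (\<Prod>l\<leftarrow>ls. [:-l, 1:])" by (metis c.injectivity)
  moreover have "length ls = n" using len unfolding ls_def by simp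
  ultimately show ?thesis by blast
qed

lemma sorted_linear_factors_unique:
  fixes xs ys :: "real list"
  assumes "sorted_wrt (\<ge>) xs" "sorted_wrt (\<ge>) ys"
    and "(\<Prod>l\<leftarrow>xs. [:-l,1:]) = (\<Prod>l\<leftarrow>ys. [:-l,1:])"
  shows "xs = ys"
  using assms
proof (induction xs arbitrary: ys)
  case Nil
  show ?case
  proof (cases ys)
    case (Cons y ys')
    have "poly (\<Prod>l\<leftarrow>ys. [:-l,1:]) y = 0" using Cons by (intro linear_poly_root) simp
    with Nil.prems(3) show ?thesis by simp
  qed simp
next
  case (Cons x xs)
  have root_iff: "poly (\<Prod>l\<leftarrow>zs. [:-l,1:]) z = 0 \<longleftrightarrow> z \<in> set zs" for zs and z :: real
    by (auto simp: poly_prod_list_zero_iff)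
  obtain y ys' where ys: "ys = y # ys'"
    using Cons.prems(3) root_iff[of "x # xs" x] root_iff[of ys x] by (cases ys) auto
  have "x \<in> set ys" "y \<in> set (x # xs)"
    using Cons.prems(3) root_iff[of "x # xs"] root_iff[of ys] unfolding ys by auto
  then have "x \<le> y" "y \<le> x" using Cons.prems(1,2) unfolding ys by auto
  then have xy: "x = y" by simp
  have "[:-x,1:] * (\<Prod>l\<leftarrow>xs. [:-l,1:]) = [:-x,1:] * (\<Prod>l\<leftarrow>ys'. [:-l,1:])"
    using Cons.prems(3) unfolding ys xy by simp
  moreover have "[:-x,1:] \<noteq> (0 :: real poly)" by simp
  ultimately have "(\<Prod>l\<leftarrow>xs. [:-l,1:]) = (\<Prod>l\<leftarrow>ys'. [:-l,1:])"
    using mult_left_cancel by blast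
  with Cons.prems(1,2) Cons.IH[of ys'] have "xs = ys'" unfolding ys by simp
  with xy ys show ?case by simp
qed

lemma eigenvalues_desc_real_symmetric:
  fixes A :: "real mat"
  assumes A: "A \<in> carrier_mat n n"
    and sym: "\<And>i j. i < n \<Longrightarrow> j < n \<Longrightarrow> A $$ (i,j) = A $$ (j,i)"
  shows "length (eigenvalues_desc A) = n" "sorted_wrt (\<ge>) (eigenvalues_desc A)"
    "char_poly A = (\<Prod>l\<leftarrow>eigenvalues_desc A. [:-l, 1:])"
proof -
  obtain ls0 where ls0: "length ls0 = n" "char_poly A = (\<Prod>l\<leftarrow>ls0. [:-l, 1:])"
    using char_poly_real_symmetric_splits[OF A sym] by blast
  define ls where "ls = rev (sort ls0)"
  have "mset (map (\<lambda>l. [:-l, 1:]) ls) = mset (map (\<lambda>l. [:-l, 1:]) ls0)" unfolding ls_def by simp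
  then have "(\<Prod>l\<leftarrow>ls. [:-l, 1:]) = (\<Prod>l\<leftarrow>ls0. [:-l, 1:])" by (metis prod_mset_prod_list)
  moreover have "sorted_wrt (\<ge>) ls"
    unfolding ls_def sorted_wrt_rev using sorted_sort[of ls0] by (simp add: sorted_wrt_iff_nth_less)
  moreover have "length ls = dim_row A" unfolding ls_def using ls0 A by simp
  ultimately have "length ls = dim_row A \<and> sorted_wrt (\<ge>) ls \<and> char_poly A = (\<Prod>l\<leftarrow>ls. [:-l, 1:])"
    using ls0 by simp
  then have "\<exists>!ls. length ls = dim_row A \<and> sorted_wrt (\<ge>) ls \<and> char_poly A = (\<Prod>l\<leftarrow>ls. [:-l, 1:])"
    using sorted_linear_factors_unique by (intro ex1I[of _ ls]) auto
  from theI'[OF this] have "length (eigenvalues_desc A) = n \<and> sorted_wrt (\<ge>) (eigenvalues_desc A) \<and>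
      char_poly A = (\<Prod>l\<leftarrow>eigenvalues_desc A. [:-l, 1:])"
    unfolding eigenvalues_desc_def using A by simp
  then show "length (eigenvalues_desc A) = n" "sorted_wrt (\<ge>) (eigenvalues_desc A)"
    "char_poly A = (\<Prod>l\<leftarrow>eigenvalues_desc A. [:-l, 1:])"
    by simp_all
qed

section \<open>Traces\<close>

definition mat_trace :: "'a::comm_ring_1 mat \<Rightarrow> 'a" where
  "mat_trace M = (\<Sum>i<dim_row M. M $$ (i,i))"

lemma mat_trace_mult_comm:
  fixes X Y :: "'a::comm_ring_1 mat"
  assumes X: "X \<in> carrier_mat n n" and Y: "Y \<in> carrier_mat n n"
  shows "mat_trace (X * Y) = mat_trace (Y * X)"
proof -
  have "mat_trace (X * Y) = (\<Sum>i<n. \<Sum>k<n. X $$ (i,k) * Y $$ (k,i))"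
    unfolding mat_trace_def using X Y by (simp add: scalar_prod_def lessThan_atLeast0)
  also have "\<dots> = (\<Sum>k<n. \<Sum>i<n. X $$ (i,k) * Y $$ (k,i))" by (rule sum.swap)
  also have "\<dots> = mat_trace (Y * X)"
    unfolding mat_trace_def using X Y by (simp add: scalar_prod_def lessThan_atLeast0 mult.commute)
  finally show ?thesis .
qed

lemma mat_trace_similar:
  fixes A B :: "'a::comm_ring_1 mat"
  assumes "similar_mat_wit A B P Q"
  shows "mat_trace A = mat_trace B"
proof -
  from similar_mat_witD[OF refl assms] obtain n where
    B: "B \<in> carrier_mat n n" and P: "P \<in> carrier_mat n n" and Q: "Q \<in> carrier_mat n n"
    and QP: "Q * P = 1\<^sub>m n" and AB: "A = P * B * Q" by blast
  have "mat_trace A = mat_trace (P * (B * Q))" unfolding AB using P B Q by (simp add: assoc_mult_mat)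
  also have "\<dots> = mat_trace ((B * Q) * P)" using P B Q by (intro mat_trace_mult_comm) auto
  also have "\<dots> = mat_trace B" using P B Q QP by (simp add: assoc_mult_mat)
  finally show ?thesis .
qed

lemma upper_triangular_square_diag:
  fixes B :: "'a::comm_ring_1 mat"
  assumes B: "B \<in> carrier_mat n n" and ut: "upper_triangular B" and i: "i < n"
  shows "(B * B) $$ (i,i) = (B $$ (i,i))\<^sup>2"
proof -
  have "(B * B) $$ (i,i) = (\<Sum>k<n. B $$ (i,k) * B $$ (k,i))"
    using B i by (simp add: scalar_prod_def lessThan_atLeast0)
  also have "\<dots> = (\<Sum>k<n. if k = i then (B $$ (i,i))\<^sup>2 else 0)"
  proof (intro sum.cong refl)
    fix k assume "k \<in> {..<n}"
    then show "B $$ (i,k) * B $$ (k,i) = (if k = i then (B $$ (i,i))\<^sup>2 else 0)"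
      using ut B i by (cases k i rule: linorder_cases) (auto simp: power2_eq_square upper_triangular_def)
  qed
  also have "\<dots> = (B $$ (i,i))\<^sup>2" using i by simp
  finally show ?thesis .
qed

lemma sum_roots_char_poly:
  fixes A :: "'a::conjugatable_ordered_field mat"
  assumes A: "A \<in> carrier_mat n n" and cp: "char_poly A = (\<Prod>l\<leftarrow>ls. [:-l, 1:])"
  shows "(\<Sum>i<n. ls ! i) = mat_trace A" "(\<Sum>i<n. (ls ! i)\<^sup>2) = mat_trace (A * A)"
proof -
  obtain B P Q where "schur_decomposition A ls = (B,P,Q)" by (cases "schur_decomposition A ls")
  from schur_decomposition[OF A cp this] have sim: "similar_mat_wit A B P Q"
    and ut: "upper_triangular B" and diag: "diag_mat B = ls" by auto
  have B: "B \<in> carrier_mat n n" using similar_mat_witD2[OF A sim] by auto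
  have ls: "ls ! i = B $$ (i,i)" if "i < n" for i
    using that B unfolding diag[symmetric] diag_mat_def by simp
  have "similar_mat_wit (A * A) (B * B) P Q"
    using similar_mat_wit_pow[OF sim, of 2] A B by (simp add: numeral_2_eq_2)
  then have "mat_trace (A * A) = mat_trace (B * B)" by (rule mat_trace_similar)
  also have "\<dots> = (\<Sum>i<n. (B * B) $$ (i,i))" unfolding mat_trace_def using B by simp
  also have "\<dots> = (\<Sum>i<n. (ls ! i)\<^sup>2)"
    by (intro sum.cong refl) (metis lessThan_iff ls upper_triangular_square_diag[OF B ut])
  finally show "(\<Sum>i<n. (ls ! i)\<^sup>2) = mat_trace (A * A)" ..
  have "mat_trace A = mat_trace B" using sim by (rule mat_trace_similar)
  also have "\<dots> = (\<Sum>i<n. ls ! i)" unfolding mat_trace_def using B by (simp add: ls)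
  finally show "(\<Sum>i<n. ls ! i) = mat_trace A" ..
qed

section \<open>The largest eigenvalue dominates the average row sum\<close>

lemma nonneg_quadratic_imp_linear_coeff_zero:
  fixes b c :: real
  assumes "\<And>t. 0 \<le> 2*t*b + t\<^sup>2*c"
  shows "b = 0"
proof (rule ccontr)
  assume b: "b \<noteq> 0"
  define e where "e = \<bar>c\<bar> + 1"
  have e: "e > 0" "c - 2*e < 0" unfolding e_def by auto
  have "2*(-b/e)*b + (-b/e)\<^sup>2*c = (b\<^sup>2/e\<^sup>2)*(c - 2*e)"
    using e by (simp add: field_simps power2_eq_square)
  also have "\<dots> < 0" using b e by (intro mult_pos_neg) auto
  finally show False using assms[of "-b/e"] by simp
qed

lemma quadratic_form_attains_max_on_sphere:
  fixes A :: "real mat"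
  assumes n: "n > 0"
  obtains M x0 where "(\<Sum>i<n. (x0 i)\<^sup>2) = 1" "(\<Sum>i<n. \<Sum>j<n. A $$ (i,j) * x0 i * x0 j) = M"
    "\<And>z. (\<Sum>i<n. \<Sum>j<n. A $$ (i,j) * z i * z j) \<le> M * (\<Sum>i<n. (z i)\<^sup>2)"
proof -
  define q where "q x = (\<Sum>i<n. \<Sum>j<n. A $$ (i,j) * x i * x j)" for x :: "nat \<Rightarrow> real"
  define sq where "sq x = (\<Sum>i<n. (x i)\<^sup>2)" for x :: "nat \<Rightarrow> real"
  define X where "X = product_topology (\<lambda>_. euclideanreal) {..<n}"
  \<comment> \<open>the unit sphere; intersecting it with the cube \<open>[-1,1]\<^sup>n\<close> makes compactness evident\<close>
  define D where "D = {x \<in> topspace X. sq x \<in> {1}} \<inter> PiE {..<n} (\<lambda>_. {-1..1::real})"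
  define e0 where "e0 = restrict (\<lambda>i. if i = 0 then 1 else 0::real) {..<n}"
  have "sq e0 = (\<Sum>i<n. if i = 0 then 1 else 0)" unfolding sq_def e0_def by (intro sum.cong) auto
  also have "\<dots> = 1" using n by simp
  finally have "e0 \<in> D" unfolding D_def X_def e0_def by (auto simp: PiE_iff)
  have "compactin X D"
    unfolding D_def X_def sq_def
    by (intro closed_Int_compactin closedin_continuous_map_preimage)
       (auto intro!: continuous_intros simp: compactin_PiE)
  moreover have "continuous_map X euclideanreal q"
    unfolding q_def X_def by (auto intro!: continuous_intros)
  ultimately have "compact (q ` D)" using image_compactin by fastforce
  with \<open>e0 \<in> D\<close> obtain x0 where x0: "x0 \<in> D" and max: "\<And>y. y \<in> D \<Longrightarrow> q y \<le> q x0"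
    using compact_attains_sup[of "q ` D"] by blast
  have bound: "q z \<le> q x0 * sq z" for z
  proof (cases "sq z = 0")
    case True
    then have "\<forall>i\<in>{..<n}. z i = 0" unfolding sq_def by (simp add: sum_nonneg_eq_0_iff)
    then show ?thesis using True unfolding q_def by simp
  next
    case False
    define s where "s = sqrt (sq z)"
    have s: "s > 0" "s\<^sup>2 = sq z"
      unfolding s_def using False sum_nonneg[of "{..<n}" "\<lambda>i. (z i)\<^sup>2"] by (auto simp: sq_def)
    define y where "y = restrict (\<lambda>i. z i / s) {..<n}"
    have sqy: "sq y = 1" unfolding sq_def y_def using s False[unfolded sq_def]
      by (simp add: power_divide sum_divide_distrib[symmetric]) (simp add: sq_def)
    have "y i \<in> {-1..1}" if "i < n" for i
    proof -
      have "(y i)\<^sup>2 \<le> sq y" unfolding sq_def using that by (intro member_le_sum) auto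
      then show ?thesis using sqy power2_le_iff_abs_le[of 1 "y i"] by (simp add: abs_le_iff)
    qed
    moreover have "y \<in> extensional {..<n}" unfolding y_def by simp
    ultimately have "y \<in> D" unfolding D_def X_def using sqy by (auto simp: PiE_iff)
    moreover have "q y = q z / s\<^sup>2" unfolding q_def y_def
      by (simp add: sum_divide_distrib power2_eq_square)
    ultimately have "q z / sq z \<le> q x0" using max[of y] s(2) by simp
    moreover have "sq z > 0" using s(1) s(2)[symmetric] by simp
    ultimately show ?thesis by (simp add: pos_divide_le_eq)
  qed
  have "sq x0 = 1" using x0 unfolding D_def by auto
  with bound that show ?thesis unfolding q_def sq_def by blast
qed

lemma quadratic_form_maximizer_eigenvector:
  fixes A :: "real mat"
  assumes A: "A \<in> carrier_mat n n"
    and sym: "\<And>i j. i < n \<Longrightarrow> j < n \<Longrightarrow> A $$ (i,j) = A $$ (j,i)"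
    and bound: "\<And>z. (\<Sum>i<n. \<Sum>j<n. A $$ (i,j) * z i * z j) \<le> M * (\<Sum>i<n. (z i)\<^sup>2)"
    and attained: "(\<Sum>i<n. \<Sum>j<n. A $$ (i,j) * x i * x j) = M * (\<Sum>i<n. (x i)\<^sup>2)"
  shows "A *\<^sub>v Matrix.vec n x = M \<cdot>\<^sub>v Matrix.vec n x"
proof -
  define q where "q z = (\<Sum>i<n. \<Sum>j<n. A $$ (i,j) * z i * z j)" for z :: "nat \<Rightarrow> real"
  define sq where "sq z = (\<Sum>i<n. (z i)\<^sup>2)" for z :: "nat \<Rightarrow> real"
  define w where "w z = M * sq z - q z" for z
  define B where "B y = M * (\<Sum>i<n. x i * y i) - (\<Sum>i<n. \<Sum>j<n. A $$ (i,j) * x i * y j)" for y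
  have swap: "(\<Sum>i<n. \<Sum>j<n. A $$ (i,j) * y i * x j) = (\<Sum>i<n. \<Sum>j<n. A $$ (i,j) * x i * y j)" for y
    by (subst sum.swap) (intro sum.cong refl, simp add: sym mult.commute mult.left_commute)
  \<comment> \<open>\<open>w\<close> is a nonnegative quadratic form vanishing at \<open>x\<close>, so its polar form \<open>B\<close> vanishes at \<open>x\<close>\<close>
  have "q (\<lambda>i. x i + t * y i) = q x + t * (\<Sum>i<n. \<Sum>j<n. A $$ (i,j) * x i * y j)
      + t * (\<Sum>i<n. \<Sum>j<n. A $$ (i,j) * y i * x j) + t\<^sup>2 * q y" for t y
    unfolding q_def by (simp add: algebra_simps sum.distrib sum_distrib_left power2_eq_square)
  moreover have "sq (\<lambda>i. x i + t * y i) = sq x + 2 * t * (\<Sum>i<n. x i * y i) + t\<^sup>2 * sq y" for t y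
    unfolding sq_def by (simp add: algebra_simps sum.distrib sum_distrib_left power2_eq_square)
  ultimately have expand: "w (\<lambda>i. x i + t * y i) = w x + 2*t*B y + t\<^sup>2 * w y" for t y
    unfolding w_def B_def swap by (simp add: algebra_simps)
  have w_nonneg: "w z \<ge> 0" for z using bound[of z] unfolding w_def q_def sq_def by simp
  have w_x: "w x = 0" using attained unfolding w_def q_def sq_def by simp
  have B0: "B y = 0" for y
  proof (rule nonneg_quadratic_imp_linear_coeff_zero)
    show "0 \<le> 2*t*B y + t\<^sup>2 * w y" for t
      using w_nonneg[of "\<lambda>i. x i + t * y i"] unfolding expand w_x by simp
  qed
  show ?thesis
  proof (rule eq_vecI)
    fix k assume "k < dim_vec (M \<cdot>\<^sub>v Matrix.vec n x)"
    then have k: "k < n" by simp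
    have "(\<Sum>j<n. A $$ (k,j) * x j) = (\<Sum>i<n. A $$ (i,k) * x i)"
      using k by (intro sum.cong refl) (simp add: sym)
    also have "\<dots> = M * x k"
      using B0[of "\<lambda>i. if i = k then 1 else 0"] k unfolding B_def
      by (simp add: if_distrib cong: if_cong)
    finally show "(A *\<^sub>v Matrix.vec n x) $ k = (M \<cdot>\<^sub>v Matrix.vec n x) $ k"
      using A k by (simp add: scalar_prod_def lessThan_atLeast0)
  qed (use A in simp)
qed

lemma real_symmetric_eigenvalue_ge_entry_average:
  fixes A :: "real mat"
  assumes A: "A \<in> carrier_mat n n" and n: "n > 0"
    and sym: "\<And>i j. i < n \<Longrightarrow> j < n \<Longrightarrow> A $$ (i,j) = A $$ (j,i)"
  obtains e where "eigenvalue A e" "(\<Sum>i<n. \<Sum>j<n. A $$ (i,j)) \<le> e * real n"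
proof -
  obtain M x where x: "(\<Sum>i<n. (x i)\<^sup>2) = 1" "(\<Sum>i<n. \<Sum>j<n. A $$ (i,j) * x i * x j) = M"
    and bound: "\<And>z. (\<Sum>i<n. \<Sum>j<n. A $$ (i,j) * z i * z j) \<le> M * (\<Sum>i<n. (z i)\<^sup>2)"
    using quadratic_form_attains_max_on_sphere[OF n] by blast
  have attained: "(\<Sum>i<n. \<Sum>j<n. A $$ (i,j) * x i * x j) = M * (\<Sum>i<n. (x i)\<^sup>2)"
    using x by simp
  have "A *\<^sub>v Matrix.vec n x = M \<cdot>\<^sub>v Matrix.vec n x"
    by (rule quadratic_form_maximizer_eigenvector[OF A _ bound attained]) (rule sym)
  moreover have "Matrix.vec n x \<noteq> 0\<^sub>v n"
  proof
    assume zero: "Matrix.vec n x = 0\<^sub>v n"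
    have "x i = 0" if "i < n" for i
      using arg_cong[where f = "\<lambda>v. v $ i", OF zero] that by simp
    then show False using x(1) by simp
  qed
  moreover have "Matrix.vec n x \<in> carrier_vec n" by simp
  ultimately have "eigenvalue A M" unfolding eigenvalue_def eigenvector_def using A by blast
  moreover have "(\<Sum>i<n. \<Sum>j<n. A $$ (i,j)) \<le> M * real n" using bound[of "\<lambda>_. 1"] by simp
  ultimately show ?thesis using that by blast
qed

section \<open>The adjacency matrix\<close>

lemma adj_mat_carrier: "adj_mat n E \<in> carrier_mat n n"
  unfolding adj_mat_def by simp

lemma adj_mat_index: "i < n \<Longrightarrow> j < n \<Longrightarrow> adj_mat n E $$ (i,j) = (if E i j then 1 else 0)"
  unfolding adj_mat_def by simp

lemma adj_mat_symmetric:
  assumes "simple_graph n E" "i < n" "j < n"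
  shows "adj_mat n E $$ (i,j) = adj_mat n E $$ (j,i)"
  using assms unfolding simple_graph_def by (auto simp: adj_mat_index)

lemma num_edges_eq_card_ordered:
  assumes "simple_graph n E"
  shows "num_edges n E = card {(i,j). i < j \<and> j < n \<and> E i j}"
proof -
  define Up where "Up = {(i,j). i < j \<and> j < n \<and> E i j}"
  have symE: "E j i" if "E i j" "i < n" "j < n" for i j using assms that unfolding simple_graph_def by blast
  have irr: "\<not> E i i" if "i < n" for i using assms that unfolding simple_graph_def by blast
  have "{{i, j} | i j. i < n \<and> j < n \<and> E i j} = (\<lambda>(i,j). {i,j}) ` Up"
  proof (intro equalityI subsetI)
    fix e assume "e \<in> {{i, j} | i j. i < n \<and> j < n \<and> E i j}"
    then obtain i j where e: "e = {i,j}" "i < n" "j < n" "E i j" by blast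
    with irr have "i < j \<or> j < i" by (metis linorder_neqE_nat)
    with e symE have "(i,j) \<in> Up \<or> (j,i) \<in> Up" unfolding Up_def by blast
    moreover have "{i,j} = (\<lambda>(i,j). {i,j}) (i,j)" "{i,j} = (\<lambda>(i,j). {i,j}) (j,i)" by auto
    ultimately show "e \<in> (\<lambda>(i,j). {i,j}) ` Up" using e(1) by blast
  next
    fix e assume "e \<in> (\<lambda>(i,j). {i,j}) ` Up"
    then obtain i j where "e = {i,j}" "i < j" "j < n" "E i j" unfolding Up_def by auto
    then show "e \<in> {{i, j} | i j. i < n \<and> j < n \<and> E i j}" by auto
  qed
  moreover have "inj_on (\<lambda>(i,j). {i,j::nat}) Up"
    by (rule inj_onI) (auto simp: Up_def doubleton_eq_iff)
  ultimately show ?thesis unfolding num_edges_def Up_def[symmetric] by (simp add: card_image)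
qed

lemma sum_adj_mat_eq_twice_num_edges:
  assumes G: "simple_graph n E"
  shows "(\<Sum>i<n. \<Sum>j<n. adj_mat n E $$ (i,j)) = 2 * real (num_edges n E)"
proof -
  define Up where "Up = {(i,j). i < j \<and> j < n \<and> E i j}"
  define Lo where "Lo = {(i,j). j < i \<and> i < n \<and> E i j}"
  have symE: "E j i" if "E i j" "i < n" "j < n" for i j using G that unfolding simple_graph_def by blast
  have irr: "\<not> E i i" if "i < n" for i using G that unfolding simple_graph_def by blast
  have fin: "finite Up" "finite Lo" unfolding Up_def Lo_def
    by (rule finite_subset[of _ "{..<n} \<times> {..<n}"]; auto)+
  have "(\<Sum>i<n. \<Sum>j<n. adj_mat n E $$ (i,j)) = (\<Sum>p\<in>{..<n} \<times> {..<n}. if E (fst p) (snd p) then 1 else 0)"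
    by (simp add: adj_mat_index sum.cartesian_product case_prod_beta)
  also have "\<dots> = real (card {p \<in> {..<n} \<times> {..<n}. E (fst p) (snd p)})"
    by (simp add: sum.inter_filter[symmetric])
  also have "{p \<in> {..<n} \<times> {..<n}. E (fst p) (snd p)} = Up \<union> Lo"
  proof (intro equalityI subsetI)
    fix p assume "p \<in> {p \<in> {..<n} \<times> {..<n}. E (fst p) (snd p)}"
    then obtain i j where p: "p = (i,j)" "i < n" "j < n" "E i j" by auto
    with irr have "i < j \<or> j < i" by (metis linorder_neqE_nat)
    with p show "p \<in> Up \<union> Lo" unfolding Up_def Lo_def by auto
  qed (auto simp: Up_def Lo_def)
  also have "card (Up \<union> Lo) = card Up + card Lo"
    using fin by (rule card_Un_disjoint) (auto simp: Up_def Lo_def)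
  also have "card Lo = card Up"
  proof -
    have "bij_betw prod.swap Up Lo" unfolding bij_betw_def Up_def Lo_def using symE by (auto simp: image_iff)
    then show ?thesis by (simp add: bij_betw_same_card)
  qed
  finally show ?thesis using num_edges_eq_card_ordered[OF G] unfolding Up_def by simp
qed

lemma mat_trace_adj_mat:
  assumes "simple_graph n E"
  shows "mat_trace (adj_mat n E) = 0"
  using assms adj_mat_carrier[of n E] unfolding mat_trace_def simple_graph_def by (simp add: adj_mat_index)

lemma mat_trace_adj_mat_square:
  assumes G: "simple_graph n E"
  shows "mat_trace (adj_mat n E * adj_mat n E) = 2 * real (num_edges n E)"
proof -
  let ?A = "adj_mat n E"
  have "mat_trace (?A * ?A) = (\<Sum>i<n. \<Sum>k<n. ?A $$ (i,k) * ?A $$ (k,i))"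
    unfolding mat_trace_def using adj_mat_carrier[of n E] by (simp add: scalar_prod_def lessThan_atLeast0)
  also have "\<dots> = (\<Sum>i<n. \<Sum>k<n. ?A $$ (i,k))"
    using adj_mat_symmetric[OF G] by (intro sum.cong refl) (simp add: adj_mat_index)
  finally show ?thesis using sum_adj_mat_eq_twice_num_edges[OF G] by simp
qed

section \<open>Bounding the Hueckel energy by the spectral moments\<close>

lemma sum_mult_le_sqrt_sum_squares:
  fixes u v :: "'a \<Rightarrow> real"
  shows "(\<Sum>i\<in>I. u i * v i) \<le> sqrt (\<Sum>i\<in>I. (u i)\<^sup>2) * sqrt (\<Sum>i\<in>I. (v i)\<^sup>2)"
proof -
  have "(\<Sum>i\<in>I. u i * v i) \<le> (\<Sum>i\<in>I. \<bar>u i\<bar> * \<bar>v i\<bar>)"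
    by (intro sum_mono) (metis abs_ge_self abs_mult)
  also have "\<dots> \<le> L2_set u I * L2_set v I" by (rule L2_set_mult_ineq)
  finally show ?thesis unfolding L2_set_def .
qed

lemma sum_centered_mult:
  fixes w x :: "'a \<Rightarrow> real"
  assumes "card I > 0"
  shows "(\<Sum>i\<in>I. (w i - sum w I / card I) * (x i - sum x I / card I))
    = (\<Sum>i\<in>I. w i * x i) - sum w I * sum x I / card I"
proof -
  define a b where "a = sum w I / card I" and "b = sum x I / card I"
  have "(\<Sum>i\<in>I. (w i - a) * (x i - b)) = (\<Sum>i\<in>I. w i * x i) - sum w I * b - a * sum x I + card I * (a * b)"
    by (simp add: left_diff_distrib right_diff_distrib sum_subtractf
        sum_distrib_left[symmetric] sum_distrib_right[symmetric])
  also have "\<dots> = (\<Sum>i\<in>I. w i * x i) - sum w I * sum x I / card I"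
    using assms unfolding a_def b_def by (simp add: field_simps)
  finally show ?thesis unfolding a_def b_def .
qed

lemma sum_mult_le_centered_bound:
  fixes w x :: "'a \<Rightarrow> real"
  assumes "card I > 0"
  shows "(\<Sum>i\<in>I. w i * x i) \<le> sum w I * sum x I / card I
    + sqrt ((\<Sum>i\<in>I. (w i)\<^sup>2) - (sum w I)\<^sup>2 / card I) * sqrt ((\<Sum>i\<in>I. (x i)\<^sup>2) - (sum x I)\<^sup>2 / card I)"
proof -
  have centered_square: "(\<Sum>i\<in>I. (f i - sum f I / card I)\<^sup>2) = (\<Sum>i\<in>I. (f i)\<^sup>2) - (sum f I)\<^sup>2 / card I"
    for f :: "'a \<Rightarrow> real"
    using sum_centered_mult[OF assms, of f f] by (simp add: power2_eq_square)
  have "(\<Sum>i\<in>I. w i * x i) = sum w I * sum x I / card I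
      + (\<Sum>i\<in>I. (w i - sum w I / card I) * (x i - sum x I / card I))"
    using sum_centered_mult[OF assms] by simp
  also have "\<dots> \<le> sum w I * sum x I / card I
      + sqrt (\<Sum>i\<in>I. (w i - sum w I / card I)\<^sup>2) * sqrt (\<Sum>i\<in>I. (x i - sum x I / card I)\<^sup>2)"
    by (intro add_left_mono sum_mult_le_sqrt_sum_squares)
  finally show ?thesis unfolding centered_square .
qed

lemma sum_lessThan_split_first:
  fixes f :: "nat \<Rightarrow> 'a::comm_monoid_add"
  shows "0 < n \<Longrightarrow> (\<Sum>i<n. f i) = f 0 + (\<Sum>i\<in>{1..<n}. f i)"
  using sum.atLeast_Suc_lessThan[of 0 n f] by (simp add: lessThan_atLeast0)

lemma sum_lessThan_split_at:
  fixes f :: "nat \<Rightarrow> 'a::comm_monoid_add"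
  shows "r < n \<Longrightarrow> (\<Sum>i<n. f i) = (\<Sum>i<r. f i) + f r + (\<Sum>i\<in>{Suc r..<n}. f i)"
  using sum.atLeastLessThan_concat[of 0 r n f] sum.atLeast_Suc_lessThan[of r n f]
  by (simp add: atLeast0LessThan add.assoc)

lemma sum_zero_imp_first_square_le:
  fixes l :: "nat \<Rightarrow> real"
  assumes n: "0 < n" and sum: "(\<Sum>i<n. l i) = 0"
  shows "real n * (l 0)\<^sup>2 \<le> (real n - 1) * (\<Sum>i<n. (l i)\<^sup>2)"
proof -
  have "l 0 = - (\<Sum>i\<in>{1..<n}. 1 * l i)"
    using sum sum_lessThan_split_first[OF n, of l] by simp
  then have "(l 0)\<^sup>2 = (\<Sum>i\<in>{1..<n}. 1 * l i)\<^sup>2" by simp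
  also have "\<dots> \<le> (\<Sum>i\<in>{1..<n}. 1\<^sup>2) * (\<Sum>i\<in>{1..<n}. (l i)\<^sup>2)"
    by (rule Cauchy_Schwarz_ineq_sum)
  also have "\<dots> = (real n - 1) * ((\<Sum>i<n. (l i)\<^sup>2) - (l 0)\<^sup>2)"
    using sum_lessThan_split_first[OF n, of "\<lambda>i. (l i)\<^sup>2"] n by (simp add: of_nat_diff)
  finally show ?thesis by (simp add: algebra_simps)
qed

text \<open>Eigenvalues are indexed from \<open>0\<close>. Since they sum to zero, the Hueckel energy
  \<open>2(\<lambda>\<^sub>0 + \<dots> + \<lambda>\<^sub>r\<^sub>-\<^sub>1) + \<lambda>\<^sub>r\<close> of a graph on \<open>2r + 1\<close> vertices equals
  \<open>\<Sum>\<^sub>i huckel_weight r i * \<lambda>\<^sub>i\<close>.\<close>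

definition huckel_weight :: "nat \<Rightarrow> nat \<Rightarrow> real" where
  "huckel_weight r i = (if i < r then 1 else if i = r then 0 else -1)"

lemma sum_huckel_weight_mult:
  "(\<Sum>i<2*r+1. huckel_weight r i * f i) = (\<Sum>i<r. f i) - (\<Sum>i\<in>{Suc r..<2*r+1}. f i)"
proof -
  have "(\<Sum>i<r. huckel_weight r i * f i) = (\<Sum>i<r. f i)"
    by (intro sum.cong refl) (simp add: huckel_weight_def)
  moreover have "(\<Sum>i\<in>{Suc r..<2*r+1}. huckel_weight r i * f i) = - (\<Sum>i\<in>{Suc r..<2*r+1}. f i)"
    by (simp add: huckel_weight_def sum_negf[symmetric])
  moreover have "huckel_weight r r = 0" by (simp add: huckel_weight_def)
  ultimately show ?thesis
    using sum_lessThan_split_at[of r "2*r+1" "\<lambda>i. huckel_weight r i * f i"] by simp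
qed

lemma huckel_sum_eq_weighted:
  fixes l :: "nat \<Rightarrow> real"
  assumes sum: "(\<Sum>i<2*r+1. l i) = 0" and r: "0 < r"
  shows "2 * (\<Sum>i<r. l i) + l r = l 0 + (\<Sum>i\<in>{1..<2*r+1}. huckel_weight r i * l i)"
proof -
  have "2 * (\<Sum>i<r. l i) + l r = (\<Sum>i<2*r+1. l i) + (\<Sum>i<r. l i) - (\<Sum>i\<in>{Suc r..<2*r+1}. l i)"
    using sum_lessThan_split_at[of r "2*r+1" l] by simp
  also have "\<dots> = (\<Sum>i<2*r+1. huckel_weight r i * l i)"
    unfolding sum sum_huckel_weight_mult by simp
  also have "\<dots> = l 0 + (\<Sum>i\<in>{1..<2*r+1}. huckel_weight r i * l i)"
    using r by (simp add: sum_lessThan_split_first huckel_weight_def)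
  finally show ?thesis .
qed

lemma huckel_weight_sums:
  assumes r: "0 < r"
  shows "(\<Sum>i\<in>{1..<2*r+1}. huckel_weight r i) = -1"
    and "(\<Sum>i\<in>{1..<2*r+1}. (huckel_weight r i)\<^sup>2) = 2 * real r - 1"
proof -
  have first: "huckel_weight r 0 = 1" using r by (simp add: huckel_weight_def)
  have "(\<Sum>i<2*r+1. huckel_weight r i) = 0"
    using sum_huckel_weight_mult[where r = r and f = "\<lambda>_. 1"] by simp
  then show "(\<Sum>i\<in>{1..<2*r+1}. huckel_weight r i) = -1"
    using sum_lessThan_split_first[of "2*r+1" "huckel_weight r"] first by simp
  have "(\<Sum>i<r. huckel_weight r i) = r" by (simp add: huckel_weight_def)
  moreover have "(\<Sum>i\<in>{Suc r..<2*r+1}. huckel_weight r i) = - real r"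
    by (simp add: huckel_weight_def)
  ultimately have "(\<Sum>i<2*r+1. (huckel_weight r i)\<^sup>2) = 2 * real r"
    using sum_huckel_weight_mult[where r = r and f = "huckel_weight r"] by (simp add: power2_eq_square)
  then show "(\<Sum>i\<in>{1..<2*r+1}. (huckel_weight r i)\<^sup>2) = 2 * real r - 1"
    using sum_lessThan_split_first[of "2*r+1" "\<lambda>i. (huckel_weight r i)\<^sup>2"] first by simp
qed

lemma huckel_sum_le_centered_bound:
  fixes l :: "nat \<Rightarrow> real"
  assumes n: "n = 2*r+1" and r: "0 < r" and sum: "(\<Sum>i<n. l i) = 0"
  shows "2 * (\<Sum>i<r. l i) + l r \<le> real n / (real n - 1) * l 0
    + sqrt (((real n)\<^sup>2 - 3 * real n + 1) / (real n - 1)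
            * ((\<Sum>i<n. (l i)\<^sup>2) - real n / (real n - 1) * (l 0)\<^sup>2))"
proof -
  define N Q where "N = real n" and "Q = (\<Sum>i<n. (l i)\<^sup>2)"
  have N1: "N - 1 = 2 * real r" unfolding N_def n by simp
  then have nz: "N - 1 \<noteq> 0" using r by simp
  have card: "real (card {1..<n}) = N - 1" and card_pos: "0 < card {1..<n}" unfolding N_def n using r by simp_all
  have weights: "(\<Sum>i\<in>{1..<n}. huckel_weight r i) = -1"
    "(\<Sum>i\<in>{1..<n}. (huckel_weight r i)\<^sup>2) = 2 * real r - 1"
    using huckel_weight_sums[OF r] unfolding n .
  have rest: "(\<Sum>i\<in>{1..<n}. l i) = - l 0" "(\<Sum>i\<in>{1..<n}. (l i)\<^sup>2) = Q - (l 0)\<^sup>2"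
    using sum sum_lessThan_split_first[of n l] sum_lessThan_split_first[of n "\<lambda>i. (l i)\<^sup>2"]
    unfolding Q_def n by auto
  have "2 * (\<Sum>i<r. l i) + l r = l 0 + (\<Sum>i\<in>{1..<n}. huckel_weight r i * l i)"
    using huckel_sum_eq_weighted[where r = r and l = l] sum r unfolding n by simp
  also have "\<dots> \<le> l 0 + (-1 * - l 0 / (N - 1)
      + sqrt (2 * real r - 1 - (-1)\<^sup>2 / (N - 1)) * sqrt (Q - (l 0)\<^sup>2 - (- l 0)\<^sup>2 / (N - 1)))"
    using sum_mult_le_centered_bound[OF card_pos, of "huckel_weight r" l]
    unfolding weights rest card by simp
  also have "2 * real r - 1 - (-1)\<^sup>2 / (N - 1) = (N\<^sup>2 - 3 * N + 1) / (N - 1)"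
    using nz unfolding N1[symmetric] by (simp add: field_simps power2_eq_square)
  also have "Q - (l 0)\<^sup>2 - (- l 0)\<^sup>2 / (N - 1) = Q - N / (N - 1) * (l 0)\<^sup>2"
    using nz by (simp add: field_simps)
  also have "l 0 + (-1 * - l 0 / (N - 1) + sqrt ((N\<^sup>2 - 3 * N + 1) / (N - 1)) * sqrt (Q - N / (N - 1) * (l 0)\<^sup>2))
      = N / (N - 1) * l 0 + sqrt ((N\<^sup>2 - 3 * N + 1) / (N - 1) * (Q - N / (N - 1) * (l 0)\<^sup>2))"
    using nz unfolding real_sqrt_mult by (simp add: field_simps)
  finally show ?thesis unfolding N_def Q_def .
qed

lemma sqrt_le_linear:
  fixes K a q t :: real
  assumes "0 \<le> K" "0 \<le> t" "q \<le> t\<^sup>2 * (K + a)"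
  shows "sqrt (K * (q - a * t\<^sup>2)) \<le> K * t"
proof -
  have "K * (q - a * t\<^sup>2) \<le> (K * t)\<^sup>2"
    using assms mult_left_mono[of "q - a * t\<^sup>2" "K * t\<^sup>2" K] by (simp add: algebra_simps power2_eq_square)
  \<comment> \<open>\<open>sqrt\<close> is odd on \<open>\<real>\<close>, hence monotone everywhere: no sign condition on \<open>q - a t\<^sup>2\<close> is needed\<close>
  then have "sqrt (K * (q - a * t\<^sup>2)) \<le> sqrt ((K * t)\<^sup>2)" by (rule real_sqrt_le_mono)
  with assms show ?thesis by simp
qed

text \<open>Hypothesis \<open>beyond\<close> places \<open>s\<close> past the maximiser of \<open>t \<mapsto> a t + sqrt (K (q - a t\<^sup>2))\<close>,
  which is the point where \<open>q = t\<^sup>2(K + a)\<close>.\<close>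

lemma linear_plus_sqrt_antimono:
  fixes a K q s t :: real
  assumes a: "0 < a" and K: "0 < K" and st: "s \<le> t" "0 \<le> s"
    and dom: "a * t\<^sup>2 \<le> q" and beyond: "q \<le> s\<^sup>2 * (K + a)"
  shows "a * t + sqrt (K * (q - a * t\<^sup>2)) \<le> a * s + sqrt (K * (q - a * s\<^sup>2))"
proof -
  define u w where "u = sqrt (K * (q - a * s\<^sup>2))" and "w = sqrt (K * (q - a * t\<^sup>2))"
  have "s\<^sup>2 \<le> t\<^sup>2" using st by (simp add: power_mono)
  then have dom_s: "a * s\<^sup>2 \<le> q" using dom a by (meson mult_left_mono less_imp_le order_trans)
  have "s\<^sup>2 * (K + a) \<le> t\<^sup>2 * (K + a)" using \<open>s\<^sup>2 \<le> t\<^sup>2\<close> K a by (intro mult_right_mono) auto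
  then have u_le: "u \<le> K * s" and w_le: "w \<le> K * t"
    unfolding u_def w_def using K st beyond by (auto intro!: sqrt_le_linear)
  have "u\<^sup>2 = K * (q - a * s\<^sup>2)" "w\<^sup>2 = K * (q - a * t\<^sup>2)" "0 \<le> u" "0 \<le> w"
    unfolding u_def w_def using K dom dom_s by auto
  then have diff: "(u - w) * (u + w) = K * a * (t - s) * (t + s)"
    by (simp add: power2_eq_square algebra_simps)
  have "a * (t - s) \<le> u - w"
  proof (cases "u + w > 0")
    case True
    have "a * (t - s) * (u + w) \<le> a * (t - s) * (K * (t + s))"
      using u_le w_le a st by (intro mult_left_mono) (auto simp: algebra_simps)
    also have "\<dots> = (u - w) * (u + w)" using diff by (simp add: algebra_simps)
    finally show ?thesis using True by (simp add: mult_le_cancel_right)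
  next
    case False
    then have "u = 0" "w = 0" using \<open>0 \<le> u\<close> \<open>0 \<le> w\<close> by auto
    with diff K a st have "t = s" by auto
    with \<open>u = 0\<close> \<open>w = 0\<close> show ?thesis by simp
  qed
  then show ?thesis unfolding u_def w_def by (simp add: algebra_simps)
qed

lemma sum_squares_le_of_first_ge_mean:
  fixes l :: "nat \<Rightarrow> real"
  assumes n: "0 < n" and sum: "(\<Sum>i<n. l i) = 0" and q: "(\<Sum>i<n. (l i)\<^sup>2) = q" "0 < q"
    and first: "q / real n \<le> l 0"
  shows "q \<le> real n * (real n - 1)"
proof -
  have "real n * (q / real n)\<^sup>2 \<le> real n * (l 0)\<^sup>2"
    using first q n by (intro mult_left_mono power_mono) auto
  also have "\<dots> \<le> (real n - 1) * q" using sum_zero_imp_first_square_le[OF n sum] q by simp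
  finally have "q * q \<le> q * (real n * (real n - 1))"
    using n by (simp add: power2_eq_square field_simps)
  then show ?thesis using q(2) by simp
qed

lemma huckel_sum_le_first_bound:
  fixes l :: "nat \<Rightarrow> real" and m :: real
  assumes n: "n = 2*r+1" and r: "2 \<le> r" and sum: "(\<Sum>i<n. l i) = 0"
    and sq: "(\<Sum>i<n. (l i)\<^sup>2) = 2 * m" and first: "2 * m / real n \<le> l 0"
    and m: "real n - 1 \<le> m"
  shows "2 * (\<Sum>i<r. l i) + l r \<le> 2 * m / (real n - 1)
    + sqrt (2 * m * real n * ((real n)\<^sup>2 - 3 * real n + 1) * ((real n)\<^sup>2 - real n - 2 * m))
      / (real n * (real n - 1))"
proof -
  define N a K where "N = real n" and "a = N / (N - 1)" and "K = (N\<^sup>2 - 3 * N + 1) / (N - 1)"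
  have N: "5 \<le> N" using n r unfolding N_def by simp
  then have N0: "N \<noteq> 0" and nz: "N - 1 \<noteq> 0" and mpos: "0 < m" using m unfolding N_def by auto
  have a: "0 < a" unfolding a_def using N by simp
  have NN: "5 * N \<le> N * N" using N by (intro mult_right_mono) auto
  have K: "0 < K" unfolding K_def power2_eq_square using N NN by (intro divide_pos_pos) linarith+
  have "K + a = (N\<^sup>2 - 3 * N + 1 + N) / (N - 1)" unfolding K_def a_def by (rule add_divide_distrib[symmetric])
  also have "\<dots> = (N - 1) * (N - 1) / (N - 1)" by (simp add: power2_eq_square algebra_simps)
  also have "\<dots> = N - 1" using nz by simp
  finally have Ka: "K + a = N - 1" .
  have "N * (l 0)\<^sup>2 \<le> (N - 1) * (2 * m)"
    using sum_zero_imp_first_square_le[of n l] sum sq n unfolding N_def by simp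
  then have dom: "a * (l 0)\<^sup>2 \<le> 2 * m" using N unfolding a_def by (simp add: field_simps)
  \<comment> \<open>\<open>2m/N\<close> lies beyond the maximiser of the bound, as \<open>N\<^sup>2 \<le> 2(N - 1)\<^sup>2 \<le> 2m(N - 1)\<close>\<close>
  have "2 * (N - 1) * (N - 1) - N\<^sup>2 = N * N - 4 * N + 2" by (simp add: power2_eq_square algebra_simps)
  then have "N\<^sup>2 \<le> 2 * (N - 1) * (N - 1)" using NN N by linarith
  also have "\<dots> \<le> 2 * m * (N - 1)" using m N unfolding N_def by (intro mult_right_mono) auto
  finally have "1 \<le> 2 * m * (N - 1) / N\<^sup>2" using N0 by (simp add: le_divide_eq)
  then have "2 * m * 1 \<le> 2 * m * (2 * m * (N - 1) / N\<^sup>2)" using mpos by (intro mult_left_mono) auto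
  also have "\<dots> = (2 * m / N)\<^sup>2 * (K + a)" unfolding Ka by (simp add: power_divide power2_eq_square)
  finally have beyond: "2 * m \<le> (2 * m / N)\<^sup>2 * (K + a)" by simp
  have "2 * (\<Sum>i<r. l i) + l r \<le> a * l 0 + sqrt (K * (2 * m - a * (l 0)\<^sup>2))"
    using huckel_sum_le_centered_bound[OF n _ sum, unfolded sq] r unfolding a_def K_def N_def by simp
  also have "\<dots> \<le> a * (2 * m / N) + sqrt (K * (2 * m - a * (2 * m / N)\<^sup>2))"
    using mpos N first[folded N_def] by (intro linear_plus_sqrt_antimono[OF a K _ _ dom beyond]) auto
  also have "a * (2 * m / N) = 2 * m / (N - 1)" using N0 unfolding a_def by simp
  also have "K * (2 * m - a * (2 * m / N)\<^sup>2)
      = 2 * m * N * (N\<^sup>2 - 3 * N + 1) * (N\<^sup>2 - N - 2 * m) / (N * (N - 1))\<^sup>2"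
    using N0 nz unfolding K_def a_def by (simp add: field_simps power2_eq_square)
  also have "sqrt \<dots> = sqrt (2 * m * N * (N\<^sup>2 - 3 * N + 1) * (N\<^sup>2 - N - 2 * m)) / (N * (N - 1))"
    using N by (simp add: real_sqrt_divide)
  finally show ?thesis unfolding N_def .
qed

lemma huckel_first_bound_le_second:
  fixes N x :: real
  assumes N: "5 \<le> N" and x: "0 < x" "x \<le> N * (N - 1)"
  shows "x / (N - 1) + sqrt (x * N * (N\<^sup>2 - 3 * N + 1) * (N\<^sup>2 - N - x)) / (N * (N - 1))
         \<le> 1 / N * sqrt (x * (2 * N - 1) * (N\<^sup>2 - x))"
proof -
  define K L P Q where "K = N\<^sup>2 - 3 * N + 1" and "L = N ^ 3 - N\<^sup>2 + 3 * N - 1"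
    and "P = x * N * K * (N\<^sup>2 - N - x)" and "Q = x * (2 * N - 1) * (N\<^sup>2 - x)"
  define s q where "s = sqrt P" and "q = sqrt Q"
  have NN: "N\<^sup>2 \<ge> 5 * N" using N by (simp add: power2_eq_square mult_right_mono)
  have N3: "N ^ 3 \<ge> 5 * N\<^sup>2" using N by (simp add: power2_eq_square power3_eq_cube mult_right_mono)
  have K0: "K > 0" unfolding K_def using N NN by linarith
  have "P \<ge> 0" unfolding P_def using K0 x N
    by (intro mult_nonneg_nonneg) (auto simp: power2_eq_square algebra_simps)
  then have s: "s \<ge> 0" "s\<^sup>2 = P" unfolding s_def by auto
  have "Q \<ge> 0" unfolding Q_def using x N NN
    by (intro mult_nonneg_nonneg) (auto simp: power2_eq_square algebra_simps)
  then have q: "q \<ge> 0" "q\<^sup>2 = Q" unfolding q_def by auto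
  \<comment> \<open>after squaring, the claim reduces to \<open>2Ns \<le> N\<^sup>4(N - 1) - Lx\<close>; squaring once more, the
    difference of the two sides, multiplied by \<open>c > 0\<close>, is a perfect square in \<open>x\<close>\<close>
  define c where "c = L\<^sup>2 + 4 * N ^ 3 * K"
  have c0: "c > 0" unfolding c_def using K0 N by (smt (verit) mult_pos_pos zero_le_power2 zero_less_power)
  have "c * ((N ^ 4 * (N - 1) - L * x)\<^sup>2 - 4 * N\<^sup>2 * P) = (c * x - N ^ 4 * (N - 1) * (L + 2 * K))\<^sup>2"
    unfolding c_def P_def K_def L_def
    by (simp add: algebra_simps power2_eq_square power3_eq_cube power4_eq_xxxx)
  then have "c * ((N ^ 4 * (N - 1) - L * x)\<^sup>2 - 4 * N\<^sup>2 * P) \<ge> 0" by simp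
  then have "(2 * N * s)\<^sup>2 \<le> (N ^ 4 * (N - 1) - L * x)\<^sup>2"
    using c0 s by (simp add: zero_le_mult_iff power_mult_distrib)
  moreover have L: "0 \<le> L" "L \<le> N ^ 3" unfolding L_def using N NN N3 by linarith+
  have "L * x \<le> N ^ 3 * (N * (N - 1))" using L x N by (intro mult_mono) auto
  then have "N ^ 4 * (N - 1) - L * x \<ge> 0" by (simp add: power3_eq_cube power4_eq_xxxx algebra_simps)
  ultimately have step: "2 * N * s \<le> N ^ 4 * (N - 1) - L * x"
    by (meson abs_le_square_iff abs_of_nonneg power2_le_imp_le)
  have "(N * x + s)\<^sup>2 = N\<^sup>2 * x\<^sup>2 + P + x * (2 * N * s)" using s by (simp add: power2_eq_square algebra_simps)
  also have "\<dots> \<le> N\<^sup>2 * x\<^sup>2 + P + x * (N ^ 4 * (N - 1) - L * x)" using step x by simp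
  also have "\<dots> = ((N - 1) * q)\<^sup>2"
    unfolding power_mult_distrib q(2) unfolding P_def Q_def K_def L_def
    by (simp add: algebra_simps power2_eq_square power3_eq_cube power4_eq_xxxx)
  finally have "N * x + s \<le> (N - 1) * q" by (rule power2_le_imp_le) (use q N in simp)
  then have "(N * x + s) / (N * (N - 1)) \<le> (N - 1) * q / (N * (N - 1))"
    using N by (intro divide_right_mono) auto
  then show ?thesis using N unfolding s_def q_def P_def Q_def K_def by (simp add: add_divide_distrib)
qed

lemma eigenvalues_desc_adj_mat_first_ge:
  assumes G: "simple_graph n E" and n: "0 < n"
  shows "2 * real (num_edges n E) / real n \<le> eigenvalues_desc (adj_mat n E) ! 0"
proof -
  let ?A = "adj_mat n E" and ?ls = "eigenvalues_desc (adj_mat n E)"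
  note ev = eigenvalues_desc_real_symmetric[OF adj_mat_carrier adj_mat_symmetric[OF G]]
  obtain e where e: "eigenvalue ?A e" "(\<Sum>i<n. \<Sum>j<n. ?A $$ (i,j)) \<le> e * real n"
    using real_symmetric_eigenvalue_ge_entry_average[OF adj_mat_carrier n] adj_mat_symmetric[OF G]
    by blast
  have "poly (\<Prod>l\<leftarrow>?ls. [:-l, 1:]) e = 0"
    using e(1) eigenvalue_root_char_poly[OF adj_mat_carrier] ev(3) by simp
  then have "e \<in> set ?ls" by (simp add: poly_prod_list_zero_iff)
  with ev(2) have "e \<le> ?ls ! 0" by (cases ?ls) auto
  then have "e * real n \<le> ?ls ! 0 * real n" by (rule mult_right_mono) simp
  with e(2) have "2 * real (num_edges n E) \<le> ?ls ! 0 * real n"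
    unfolding sum_adj_mat_eq_twice_num_edges[OF G] by linarith
  with n show ?thesis by (simp add: pos_divide_le_eq)
qed

theorem mainTheorem2:
  fixes n :: nat and E :: "nat \<Rightarrow> nat \<Rightarrow> bool"
  assumes "simple_graph n E"
    and "odd n"
    and "num_edges n E \<ge> n - 1" and "n - 1 \<ge> 3"
  shows "let m = real (num_edges n E); N = real n in
    huckel_energy n E \<le>
      (if m \<le> N\<^sup>2 * (N - 3)\<^sup>2 / (2 * (N\<^sup>2 - 4 * N + 11))
       then 2 * m / (N - 1)
            + sqrt (2 * m * N * (N\<^sup>2 - 3 * N + 1) * (N\<^sup>2 - N - 2 * m)) / (N * (N - 1))
       else (1 / N) * sqrt (2 * m * (2 * N - 1) * (N\<^sup>2 - 2 * m)))"
proof -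
  define m N r ls where "m = real (num_edges n E)" and "N = real n" and "r = n div 2"
    and "ls = eigenvalues_desc (adj_mat n E)"
  have n: "n = 2 * r + 1" using assms(2) unfolding r_def by (simp add: odd_two_times_div_two_succ)
  have r: "2 \<le> r" using assms(4) n by simp
  note ev = eigenvalues_desc_real_symmetric[OF adj_mat_carrier adj_mat_symmetric[OF assms(1)]]
  have sums: "(\<Sum>i<n. ls ! i) = 0" "(\<Sum>i<n. (ls ! i)\<^sup>2) = 2 * m"
    using sum_roots_char_poly[OF adj_mat_carrier ev(3)] mat_trace_adj_mat[OF assms(1)]
      mat_trace_adj_mat_square[OF assms(1)] unfolding ls_def m_def by auto
  have first: "2 * m / N \<le> ls ! 0"
    using eigenvalues_desc_adj_mat_first_ge[OF assms(1)] n unfolding ls_def m_def N_def by simp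
  have m: "N - 1 \<le> m" using assms(3) n unfolding m_def N_def by simp
  have "huckel_energy n E = 2 * (\<Sum>i<r. ls ! i) + ls ! r"
    unfolding huckel_energy_def Let_def ls_def r_def using assms(2) by simp
  also have "\<dots> \<le> 2 * m / (N - 1) + sqrt (2 * m * N * (N\<^sup>2 - 3 * N + 1) * (N\<^sup>2 - N - 2 * m)) / (N * (N - 1))"
    using huckel_sum_le_first_bound[OF n r sums first[unfolded N_def] m[unfolded N_def]] unfolding N_def .
  finally have bound: "huckel_energy n E \<le> \<dots>" .
  have "2 * m \<le> N * (N - 1)"
    using sum_squares_le_of_first_ge_mean[OF _ sums] first m n r unfolding N_def by simp
  moreover have "5 \<le> N" "0 < 2 * m" using n r m unfolding N_def by simp_all
  ultimately have "2 * m / (N - 1) + sqrt (2 * m * N * (N\<^sup>2 - 3 * N + 1) * (N\<^sup>2 - N - 2 * m)) / (N * (N - 1))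
      \<le> (1 / N) * sqrt (2 * m * (2 * N - 1) * (N\<^sup>2 - 2 * m))"
    by (intro huckel_first_bound_le_second)
  with bound show ?thesis unfolding Let_def m_def[symmetric] N_def[symmetric] by auto
qed

end
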